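(* Let $(M,g)$ be a $\mathcal{W}^{\star}$-flat space-time (i.e. $\mathcal{W}^{\star}_{ijkl}=0$) that is a dust fluid, i.e. it satisfies Einstein's field equation $R_{ij}-\frac12 R g_{ij}+\Lambda g_{ij}=kT_{ij}$ with $T_{ij}=\mu u_iu_j$. Then $M$ is a vacuum space-time: $T_{ij}=0$.
   Context: A space-time is a $4$-dimensional Lorentzian manifold $(M,g)$ with Levi-Civita connection $\nabla$. $R_{ijkl}$ denotes the components of the Riemann curvature tensor, with index conventions such that the Ricci tensor is $R_{jk}=g^{il}R_{ijkl}$; $R=g^{jk}R_{jk}$ is the scalar curvature. The $\mathcal{W}^{\star}$-curvature tensor is $\mathcal{W}^{\star}_{ijkl}=R_{ijkl}-\tfrac{1}{3}\left[g_{jk}R_{il}-g_{jl}R_{ik}\right]$. $\Lambda$ is a constant and $k\neq0$ a constant; $\mu$ is a smooth function (energy density) and $u$ is a unit timelike vector field with $u_i=g_{ij}u^j$, $u_iu^i=-1$. *)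

theory Defs
  imports "HOL-Analysis.Analysis" "HOL-Library.Numeral_Type"
begin

text \<open>Local coordinate description of a space-time: a chart domain U (open in R^4),
  metric components g x $ i $ j, indices of type 4.\<close>

definition pd :: "4 \<Rightarrow> (real^4 \<Rightarrow> real) \<Rightarrow> real^4 \<Rightarrow> real" where
  "pd k f x = deriv (\<lambda>t. f (x + t *\<^sub>R axis k 1)) 0"

fun iter_pd :: "4 list \<Rightarrow> (real^4 \<Rightarrow> real) \<Rightarrow> real^4 \<Rightarrow> real" where
  "iter_pd [] f = f"
| "iter_pd (k # ks) f = pd k (iter_pd ks f)"

definition smooth_on :: "(real^4) set \<Rightarrow> (real^4 \<Rightarrow> real) \<Rightarrow> bool" where
  "smooth_on U f \<longleftrightarrow> (\<forall>ks. iter_pd ks f differentiable_on U)"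

definition minkowski_eta :: "real^4^4" where
  "minkowski_eta = (\<chi> i j. if i = j then (if i = 0 then -1 else 1) else 0)"

definition lorentzian_metric_on :: "(real^4) set \<Rightarrow> (real^4 \<Rightarrow> real^4^4) \<Rightarrow> bool" where
  "lorentzian_metric_on U g \<longleftrightarrow>
     (\<forall>i j. smooth_on U (\<lambda>x. g x $ i $ j)) \<and>
     (\<forall>x\<in>U. transpose (g x) = g x \<and>
        (\<exists>P::real^4^4. invertible P \<and> transpose P ** g x ** P = minkowski_eta))"

definition ginv :: "(real^4 \<Rightarrow> real^4^4) \<Rightarrow> real^4 \<Rightarrow> real^4^4" where
  "ginv g x = matrix_inv (g x)"

definition christoffel :: "(real^4 \<Rightarrow> real^4^4) \<Rightarrow> real^4 \<Rightarrow> 4 \<Rightarrow> 4 \<Rightarrow> 4 \<Rightarrow> real" where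
  "christoffel g x i j k = (1/2) * (\<Sum>l\<in>UNIV. ginv g x $ i $ l *
      (pd j (\<lambda>y. g y $ l $ k) x + pd k (\<lambda>y. g y $ l $ j) x - pd l (\<lambda>y. g y $ j $ k) x))"

definition riemann_up :: "(real^4 \<Rightarrow> real^4^4) \<Rightarrow> real^4 \<Rightarrow> 4 \<Rightarrow> 4 \<Rightarrow> 4 \<Rightarrow> 4 \<Rightarrow> real" where
  "riemann_up g x a b c d =
     pd c (\<lambda>y. christoffel g y a d b) x - pd d (\<lambda>y. christoffel g y a c b) x
     + (\<Sum>e\<in>UNIV. christoffel g x a c e * christoffel g x e d b
                  - christoffel g x a d e * christoffel g x e c b)"

text \<open>Covariant components R_{ijkl}, arranged so that R_{jk} = g^{il} R_{ijkl}.\<close>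
definition riemann :: "(real^4 \<Rightarrow> real^4^4) \<Rightarrow> real^4 \<Rightarrow> 4 \<Rightarrow> 4 \<Rightarrow> 4 \<Rightarrow> 4 \<Rightarrow> real" where
  "riemann g x i j k l = (\<Sum>a\<in>UNIV. g x $ i $ a * riemann_up g x a j l k)"

definition ricci :: "(real^4 \<Rightarrow> real^4^4) \<Rightarrow> real^4 \<Rightarrow> 4 \<Rightarrow> 4 \<Rightarrow> real" where
  "ricci g x j k = (\<Sum>i\<in>UNIV. \<Sum>l\<in>UNIV. ginv g x $ i $ l * riemann g x i j k l)"

definition scalar_curv :: "(real^4 \<Rightarrow> real^4^4) \<Rightarrow> real^4 \<Rightarrow> real" where
  "scalar_curv g x = (\<Sum>j\<in>UNIV. \<Sum>k\<in>UNIV. ginv g x $ j $ k * ricci g x j k)"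

definition Wstar :: "(real^4 \<Rightarrow> real^4^4) \<Rightarrow> real^4 \<Rightarrow> 4 \<Rightarrow> 4 \<Rightarrow> 4 \<Rightarrow> 4 \<Rightarrow> real" where
  "Wstar g x i j k l = riemann g x i j k l
     - (1/3) * (g x $ j $ k * ricci g x i l - g x $ j $ l * ricci g x i k)"

definition lower :: "(real^4 \<Rightarrow> real^4^4) \<Rightarrow> (real^4 \<Rightarrow> real^4) \<Rightarrow> real^4 \<Rightarrow> 4 \<Rightarrow> real" where
  "lower g u x i = (\<Sum>j\<in>UNIV. g x $ i $ j * u x $ j)"

definition dust_T :: "(real^4 \<Rightarrow> real^4^4) \<Rightarrow> (real^4 \<Rightarrow> real) \<Rightarrow> (real^4 \<Rightarrow> real^4) \<Rightarrow> real^4 \<Rightarrow> 4 \<Rightarrow> 4 \<Rightarrow> real" where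
  "dust_T g mu u x i j = mu x * lower g u x i * lower g u x j"

end

theory Submission
  imports Defs
begin

text \<open>Contracting \<open>W\<^sup>\<star> = 0\<close> with \<open>g\<^sup>i\<^sup>l\<close> gives \<open>3 R\<^sub>j\<^sub>k = R g\<^sub>j\<^sub>k - R\<^sub>j\<^sub>k\<close>, so the space-time is
  Einstein, \<open>R\<^sub>j\<^sub>k = (R/4) g\<^sub>j\<^sub>k\<close>. The field equation then reads \<open>c g\<^sub>i\<^sub>j = \<kappa> \<mu> u\<^sub>i u\<^sub>j\<close> with
  \<open>c = \<Lambda> - R/4\<close>. Contracting with \<open>u\<^sup>i u\<^sup>j\<close> gives \<open>-c = \<kappa> \<mu>\<close>, taking the trace gives
  \<open>4 c = -\<kappa> \<mu>\<close>; hence \<open>c = 0\<close> and \<open>\<kappa> \<mu> = 0\<close>.\<close>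

lemma matrix_inv_mult:
  fixes A :: "'a::semiring_1^'n^'n"
  assumes "invertible A"
  shows "A ** matrix_inv A = mat 1" and "matrix_inv A ** A = mat 1"
proof -
  have "A ** matrix_inv A = mat 1 \<and> matrix_inv A ** A = mat 1"
    using assms unfolding invertible_def matrix_inv_def by (rule someI_ex)
  then show "A ** matrix_inv A = mat 1" and "matrix_inv A ** A = mat 1"
    by auto
qed

lemma sum_matrix_inv_mult_entry:
  fixes A :: "real^'n^'n"
  assumes "invertible A"
  shows "(\<Sum>l\<in>UNIV. matrix_inv A $ i $ l * A $ l $ j) = (if i = j then 1 else 0)"
proof -
  have "(matrix_inv A ** A) $ i $ j = (\<Sum>l\<in>UNIV. matrix_inv A $ i $ l * A $ l $ j)"
    by (simp add: matrix_matrix_mult_def)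
  then show ?thesis
    using matrix_inv_mult(2)[OF assms] by (simp add: mat_def)
qed

lemma sum_sum_entry_mult_eq_inner:
  fixes A :: "real^'n^'n"
  shows "(\<Sum>i\<in>UNIV. \<Sum>j\<in>UNIV. A $ i $ j * v $ i * w $ j) = v \<bullet> (A *v w)"
  by (simp add: inner_vec_def matrix_vector_mult_def sum_distrib_left mult.assoc
      mult.left_commute)

lemma transpose_eq_imp_entry_sym:
  assumes "transpose A = A"
  shows "A $ i $ j = A $ j $ i"
proof -
  have "transpose A $ j $ i = A $ i $ j"
    by (simp add: transpose_def)
  then show ?thesis
    using assms by simp
qed

lemma sum_sum_matrix_inv_mult_sym_eq_card:
  fixes A :: "real^'n^'n"
  assumes "invertible A" and "transpose A = A"
  shows "(\<Sum>i\<in>UNIV. \<Sum>j\<in>UNIV. matrix_inv A $ i $ j * A $ i $ j) = CARD('n)"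
  using sum_matrix_inv_mult_entry[OF assms(1)] transpose_eq_imp_entry_sym[OF assms(2)]
  by simp

lemma invertible_minkowski_eta: "invertible minkowski_eta"
proof -
  have "det minkowski_eta = (\<Prod>i\<in>UNIV. minkowski_eta $ i $ i)"
    by (rule det_diagonal) (simp add: minkowski_eta_def)
  also have "\<dots> \<noteq> 0"
    by (simp add: minkowski_eta_def)
  finally show ?thesis
    by (simp add: invertible_det_nz)
qed

lemma lorentzian_metric_on_invertible_symmetric:
  assumes "lorentzian_metric_on U g" and "x \<in> U"
  shows "invertible (g x)" and "transpose (g x) = g x"
proof -
  obtain P :: "real^4^4" where "transpose P ** g x ** P = minkowski_eta"
    using assms unfolding lorentzian_metric_on_def by blast
  then have "det (transpose P ** g x ** P) \<noteq> 0"
    using invertible_minkowski_eta by (simp add: invertible_det_nz)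
  then show "invertible (g x)"
    by (simp add: det_mul invertible_det_nz)
  show "transpose (g x) = g x"
    using assms unfolding lorentzian_metric_on_def by blast
qed

lemma metric_multiple_eq_dust_tensor_imp_zero:
  fixes G :: "real^'n^'n" and v :: "real^'n"
  assumes "invertible G" and "transpose G = G" and "CARD('n) \<noteq> 1"
    and timelike: "(G *v v) \<bullet> v = -1"
    and field: "\<And>a b. c * G $ a $ b = m * (G *v v) $ a * (G *v v) $ b"
  shows "m = 0"
proof -
  define w where "w = G *v v"
  define H where "H = matrix_inv G"
  have "- c = c * (\<Sum>a\<in>UNIV. \<Sum>b\<in>UNIV. G $ a $ b * v $ a * v $ b)"
    using timelike by (simp add: sum_sum_entry_mult_eq_inner inner_commute)
  also have "\<dots> = (\<Sum>a\<in>UNIV. \<Sum>b\<in>UNIV. (c * G $ a $ b) * v $ a * v $ b)"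
    by (simp add: sum_distrib_left mult.assoc)
  also have "\<dots> = (\<Sum>a\<in>UNIV. \<Sum>b\<in>UNIV. (m * w $ a * w $ b) * v $ a * v $ b)"
    using field by (simp add: w_def)
  also have "\<dots> = m * (w \<bullet> v) * (w \<bullet> v)"
    by (simp add: inner_vec_def sum_distrib_left sum_distrib_right algebra_simps)
  finally have contracted_u: "- c = m"
    using timelike by (simp add: w_def)
  have "c * CARD('n) = c * (\<Sum>a\<in>UNIV. \<Sum>b\<in>UNIV. H $ a $ b * G $ a $ b)"
    using sum_sum_matrix_inv_mult_sym_eq_card[OF \<open>invertible G\<close> \<open>transpose G = G\<close>]
    by (simp add: H_def)
  also have "\<dots> = (\<Sum>a\<in>UNIV. \<Sum>b\<in>UNIV. H $ a $ b * (c * G $ a $ b))"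
    by (simp add: sum_distrib_left mult.left_commute)
  also have "\<dots> = (\<Sum>a\<in>UNIV. \<Sum>b\<in>UNIV. H $ a $ b * (m * w $ a * w $ b))"
    using field by (simp add: w_def)
  also have "\<dots> = m * (\<Sum>a\<in>UNIV. \<Sum>b\<in>UNIV. H $ a $ b * w $ a * w $ b)"
    by (simp add: sum_distrib_left mult.assoc mult.left_commute)
  also have "\<dots> = m * (w \<bullet> (H *v w))"
    by (simp only: sum_sum_entry_mult_eq_inner)
  also have "H *v w = v"
    using matrix_inv_mult(2)[OF \<open>invertible G\<close>]
    by (simp add: H_def w_def matrix_vector_mul_assoc)
  finally have traced: "c * CARD('n) = - m"
    using timelike by (simp add: w_def)
  from contracted_u traced have "c * (real CARD('n) - 1) = 0"
    by (simp add: algebra_simps)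
  then show "m = 0"
    using \<open>CARD('n) \<noteq> 1\<close> contracted_u by simp
qed

lemma ricci_eq_if_Wstar_flat:
  assumes "invertible (g x)" and "transpose (g x) = g x"
    and flat: "\<And>i j k l. Wstar g x i j k l = 0"
  shows "ricci g x j k = scalar_curv g x / 4 * g x $ j $ k"
proof -
  define G where "G = g x"
  define H where "H = ginv g x"
  define Ric where "Ric = ricci g x"
  have riemann_eq: "riemann g x a b c d = (1/3) * (G $ b $ c * Ric a d - G $ b $ d * Ric a c)"
    for a b c d
    using flat[of a b c d] unfolding Wstar_def G_def Ric_def by simp
  have contract: "(\<Sum>d\<in>UNIV. H $ a $ d * G $ j $ d) * r = (if a = j then r else 0)" for a r
  proof -
    have "(\<Sum>d\<in>UNIV. H $ a $ d * G $ j $ d) = (\<Sum>d\<in>UNIV. matrix_inv G $ a $ d * G $ d $ j)"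
      using transpose_eq_imp_entry_sym[OF \<open>transpose (g x) = g x\<close>]
      by (simp add: H_def G_def ginv_def)
    then show ?thesis
      using sum_matrix_inv_mult_entry[OF \<open>invertible (g x)\<close>] by (simp add: G_def)
  qed
  have "Ric j k = (\<Sum>a\<in>UNIV. \<Sum>d\<in>UNIV. H $ a $ d * riemann g x a j k d)"
    by (simp add: Ric_def ricci_def H_def)
  also have "\<dots> = (\<Sum>a\<in>UNIV. \<Sum>d\<in>UNIV.
      (1/3) * G $ j $ k * (H $ a $ d * Ric a d) - (1/3) * ((H $ a $ d * G $ j $ d) * Ric a k))"
    by (intro sum.cong refl) (simp add: riemann_eq algebra_simps)
  also have "\<dots> = (1/3) * G $ j $ k * scalar_curv g x
      - (1/3) * (\<Sum>a\<in>UNIV. (\<Sum>d\<in>UNIV. H $ a $ d * G $ j $ d) * Ric a k)"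
    by (simp add: sum_subtractf sum_distrib_left sum_distrib_right scalar_curv_def H_def Ric_def)
  also have "\<dots> = (1/3) * G $ j $ k * scalar_curv g x - (1/3) * Ric j k"
    by (simp add: contract)
  finally show ?thesis
    by (simp add: G_def Ric_def algebra_simps)
qed

lemma lower_eq_matrix_vector_mult: "lower g u x i = (g x *v u x) $ i"
  by (simp add: lower_def matrix_vector_mult_def)

theorem mainTheorem18:
  fixes U :: "(real^4) set" and g :: "real^4 \<Rightarrow> real^4^4"
    and u :: "real^4 \<Rightarrow> real^4" and mu :: "real^4 \<Rightarrow> real"
    and Lambda kappa :: real
  assumes "open U"
    and "lorentzian_metric_on U g"
    and "smooth_on U mu"
    and "\<forall>i. smooth_on U (\<lambda>x. u x $ i)"
    and "kappa \<noteq> 0"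
    and "\<forall>x\<in>U. \<forall>i j k l. Wstar g x i j k l = 0"
    and "\<forall>x\<in>U. (\<Sum>i\<in>UNIV. lower g u x i * u x $ i) = -1"
    and "\<forall>x\<in>U. \<forall>i j. ricci g x i j - (1/2) * scalar_curv g x * g x $ i $ j
                       + Lambda * g x $ i $ j = kappa * dust_T g mu u x i j"
  shows "\<forall>x\<in>U. \<forall>i j. dust_T g mu u x i j = 0"
proof (intro ballI allI)
  fix x i j assume "x \<in> U"
  note metric = lorentzian_metric_on_invertible_symmetric[OF assms(2) \<open>x \<in> U\<close>]
  have einstein: "ricci g x a b = scalar_curv g x / 4 * g x $ a $ b" for a b
    using ricci_eq_if_Wstar_flat[of g x] metric assms(6) \<open>x \<in> U\<close> by blast
  have field: "(Lambda - scalar_curv g x / 4) * g x $ a $ b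
      = kappa * mu x * (g x *v u x) $ a * (g x *v u x) $ b" for a b
    using assms(8)[rule_format, OF \<open>x \<in> U\<close>, of a b] einstein[of a b]
    by (auto simp: dust_T_def lower_eq_matrix_vector_mult algebra_simps)
  have timelike: "(g x *v u x) \<bullet> u x = -1"
    using assms(7) \<open>x \<in> U\<close> by (simp add: inner_vec_def lower_eq_matrix_vector_mult)
  have "kappa * mu x = 0"
    by (rule metric_multiple_eq_dust_tensor_imp_zero[OF metric _ timelike field]) simp
  then show "dust_T g mu u x i j = 0"
    using assms(5) by (simp add: dust_T_def)
qed

end
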